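(* Let $s\in(\tfrac12,1)$, $\alpha\in(0,1)$, $c>0$, let $e\in C^{\alpha}(\mathbb{R})$ be $2\pi$-periodic with $\bar e=\frac1{2\pi}\int_0^{2\pi}e>0$, and let $g\in C^{\alpha}((0,+\infty))$ satisfy (G1) $\limsup_{t\to+\infty}[g(t)+\bar e]<0$. Then there exist constants $R>0$ and $C>0$ such that for every $\lambda\in(0,1)$ and every positive $2\pi$-periodic classical solution $u$ of $$(\Delta)^s u(t)+c\,u'(t)-\lambda g(u(t))=\lambda e(t),\qquad t\in\mathbb{R},$$ one has $0<u(t)<R$ for all $t$, and $$\|u'\|_{L^2(0,2\pi)}\le C\,\|e\|_{L^2(0,2\pi)}.$$
   Context: $(-\Delta)^s u(x)=C_{1,s}\,\mathrm{P.V.}\int_{\mathbb{R}}\frac{u(x)-u(z)}{|x-z|^{1+2s}}\,dz$ with $C_{1,s}=\left(\int_{\mathbb{R}}\frac{1-\cos\xi}{|\xi|^{1+2s}}d\xi\right)^{-1}$, and $(\Delta)^s u:=-(-\Delta)^s u$. A classical solution is a $C^{2s+\alpha}$ function satisfying the equation pointwise. *)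

theory Defs
  imports "HOL-Analysis.Analysis"
begin

definition holder_on :: "real \<Rightarrow> real set \<Rightarrow> (real \<Rightarrow> real) \<Rightarrow> bool" where
  "holder_on a S f \<longleftrightarrow> (\<exists>M. \<forall>x\<in>S. \<forall>y\<in>S. \<bar>f x - f y\<bar> \<le> M * \<bar>x - y\<bar> powr a)"

text \<open>Local Hoelder condition: Hoelder on every compact subset of S (used for C^a of an open set).\<close>
definition loc_holder_on :: "real \<Rightarrow> real set \<Rightarrow> (real \<Rightarrow> real) \<Rightarrow> bool" where
  "loc_holder_on a S f \<longleftrightarrow> (\<forall>K. compact K \<and> K \<subseteq> S \<longrightarrow> holder_on a K f)"

definition holder_space :: "real \<Rightarrow> (real \<Rightarrow> real) \<Rightarrow> bool" where
  "holder_space r f \<longleftrightarrow>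
     (let k = nat \<lceil>r\<rceil> - 1; b = r - real k in
       (\<forall>j<k. \<forall>x. (deriv ^^ j) f differentiable (at x)) \<and> holder_on b UNIV ((deriv ^^ k) f))"

definition C1 :: "real \<Rightarrow> real" where
  "C1 s = 1 / (LINT \<xi>|lborel. (1 - cos \<xi>) / \<bar>\<xi>\<bar> powr (1 + 2 * s))"

definition pv_frac :: "real \<Rightarrow> (real \<Rightarrow> real) \<Rightarrow> real \<Rightarrow> real \<Rightarrow> bool" where
  "pv_frac s u x L \<longleftrightarrow>
     (\<forall>\<epsilon>>0. set_integrable lborel {z. \<epsilon> < \<bar>x - z\<bar>} (\<lambda>z. (u x - u z) / \<bar>x - z\<bar> powr (1 + 2 * s))) \<and>
     ((\<lambda>\<epsilon>. LINT z:{z. \<epsilon> < \<bar>x - z\<bar>}|lborel. (u x - u z) / \<bar>x - z\<bar> powr (1 + 2 * s))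
        \<longlongrightarrow> L) (at_right 0)"

text \<open>(Delta)^s u (x) = - (-Delta)^s u (x) = - C_{1,s} * P.V. integral, where it exists.\<close>
definition has_pos_frac_lap :: "real \<Rightarrow> (real \<Rightarrow> real) \<Rightarrow> real \<Rightarrow> real \<Rightarrow> bool" where
  "has_pos_frac_lap s u x v \<longleftrightarrow> (\<exists>L. pv_frac s u x L \<and> v = - (C1 s * L))"

definition classical_solution ::
  "real \<Rightarrow> real \<Rightarrow> real \<Rightarrow> real \<Rightarrow> (real \<Rightarrow> real) \<Rightarrow> (real \<Rightarrow> real) \<Rightarrow> (real \<Rightarrow> real) \<Rightarrow> bool" where
  "classical_solution s a c lam g e u \<longleftrightarrow>
     holder_space (2 * s + a) u \<and>
     (\<forall>t. \<exists>v. has_pos_frac_lap s u t v \<and> v + c * deriv u t - lam * g (u t) = lam * e t)"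

end

theory Submission
  imports Defs
begin

(*
  The fractional term disappears when the equation is integrated over a period and when it is
  tested against u'. For a periodic C^{1,b} function with b > 2s - 1 the principal value equals
  the absolutely convergent integral of (u t - u (t + h) + u' t h 1_{|h| <= 1}) / |h|^{1+2s};
  by Fubini and periodicity its integral against 1 vanishes, and its integral against u' is an
  odd function of h. The first identity says that g(u) has mean -e_bar, so by (G1) u falls below
  a level T independent of lam and u somewhere. The second gives c ||u'||^2 = lam <e, u'>, hence
  ||u'|| <= ||e|| / c by AM-GM, and the oscillation of u over a period is at most
  (2 pi + ||u'||^2) / 2, which bounds u from above.
*)

lemma integrable_lborel_if_integrable_on_nonneg:
  fixes f :: "real \<Rightarrow> real"
  assumes "f integrable_on A" "\<And>x. x \<in> A \<Longrightarrow> 0 \<le> f x"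
    and "(\<lambda>x. indicator A x * f x) \<in> borel_measurable borel"
  shows "integrable lborel (\<lambda>x. indicator A x * f x)"
proof -
  have "integrable lebesgue (\<lambda>x. indicator A x * f x)"
    using nonnegative_absolutely_integrable_1[OF assms(1,2)] by (simp add: set_integrable_def)
  then show ?thesis
    using integrable_completion[of "\<lambda>x. indicator A x * f x" lborel] assms(3) by simp
qed

lemma integrable_lborel_plus_reflection:
  fixes f :: "real \<Rightarrow> real"
  assumes "integrable lborel f"
  shows "integrable lborel (\<lambda>x. f x + f (- x))"
  using assms lborel_integrable_real_affine[OF assms, of "-1" 0] by simp

lemma integrable_abs_powr_Icc:
  fixes g :: real
  assumes "-1 < g"
  shows "integrable lborel (\<lambda>x. indicator {-1..1} x * \<bar>x\<bar> powr g)"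
proof -
  have "integrable lborel (\<lambda>x. indicator {0..1} x * x powr g)"
    using integrable_on_powr_from_0[OF assms, of 1]
    by (intro integrable_lborel_if_integrable_on_nonneg) auto
  from integrable_lborel_plus_reflection[OF this] show ?thesis
    by (rule Bochner_Integration.integrable_cong[THEN iffD1, rotated 2]) (auto simp: indicator_def)
qed

lemma integrable_abs_powr_outside_Icc:
  fixes g :: real
  assumes "g < -1"
  shows "integrable lborel (\<lambda>x. indicator {x. 1 < \<bar>x\<bar>} x * \<bar>x\<bar> powr g)"
proof -
  have "(\<lambda>x. x powr g) integrable_on {1..}"
    using has_integral_powr_to_inf[OF assms zero_less_one] by blast
  then have "integrable lborel (\<lambda>x. indicator {1..} x * x powr g)"
    by (intro integrable_lborel_if_integrable_on_nonneg) auto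
  then have "integrable lborel (\<lambda>x. indicator {1<..} x * x powr g)"
    by (rule set_integrable_subset[of lborel "{1..}" "\<lambda>x. x powr g" "{1<..}",
          unfolded set_integrable_def, simplified]) auto
  from integrable_lborel_plus_reflection[OF this] show ?thesis
    by (rule Bochner_Integration.integrable_cong[THEN iffD1, rotated 2]) (auto simp: indicator_def)
qed

lemma lborel_integral_odd_eq_0:
  fixes f :: "real \<Rightarrow> real"
  assumes "\<And>x. f (- x) = - f x"
  shows "(\<integral>x. f x \<partial>lborel) = 0"
proof -
  have "(\<integral>x. f x \<partial>lborel) = (\<integral>x. f (- x) \<partial>lborel)"
    using lborel_integral_real_affine[of "-1" f 0] by simp
  also have "\<dots> = - (\<integral>x. f x \<partial>lborel)"
    by (simp add: assms)
  finally show ?thesis by simp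
qed

lemma tendsto_lborel_integral_truncation:
  fixes W :: "real \<Rightarrow> real"
  assumes [measurable]: "W \<in> borel_measurable lborel"
    and D: "integrable lborel D" and dominated: "\<And>h. \<bar>W h\<bar> \<le> D h" and "\<epsilon> \<longlonglongrightarrow> 0"
  shows "(\<lambda>n. \<integral>h. indicator {h. \<epsilon> n < \<bar>h\<bar>} h * W h \<partial>lborel) \<longlonglongrightarrow> (\<integral>h. W h \<partial>lborel)"
proof (rule integral_dominated_convergence[OF _ _ D])
  have "\<bar>indicator {h. \<epsilon> n < \<bar>h\<bar>} h * W h\<bar> \<le> D h" for n h
    using dominated[of h] order_trans[OF abs_ge_zero dominated[of h]] by (simp add: indicator_def)
  then show "AE h in lborel. norm (indicator {h. \<epsilon> n < \<bar>h\<bar>} h * W h) \<le> D h" for n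
    by simp
  have pointwise: "(\<lambda>n. indicator {h. \<epsilon> n < \<bar>h\<bar>} h * W h) \<longlonglongrightarrow> W h" if "h \<noteq> 0" for h
  proof -
    have "\<forall>\<^sub>F n in sequentially. \<epsilon> n < \<bar>h\<bar>"
      using order_tendstoD(2)[OF assms(4), of "\<bar>h\<bar>"] that by simp
    then have "\<forall>\<^sub>F n in sequentially. indicator {h. \<epsilon> n < \<bar>h\<bar>} h * W h = W h"
      by (rule eventually_mono) simp
    then show ?thesis
      by (rule tendsto_eventually)
  qed
  show "AE h in lborel. (\<lambda>n. indicator {h. \<epsilon> n < \<bar>h\<bar>} h * W h) \<longlonglongrightarrow> W h"
    by (rule AE_mp[OF AE_lborel_singleton[of 0] AE_I2]) (simp add: pointwise)
qed (measurable, measurable)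

lemma integrable_indicator_Icc_mult_dominated:
  fixes W :: "real \<Rightarrow> real \<Rightarrow> real" and G :: "real \<Rightarrow> real"
  assumes [measurable]: "(\<lambda>(t, h). W t h) \<in> borel_measurable (lborel \<Otimes>\<^sub>M lborel)" "G \<in> borel_measurable borel"
    and D: "integrable lborel D" and WD: "\<And>t h. \<bar>W t h\<bar> \<le> D h"
    and K: "\<And>t. t \<in> {a..b} \<Longrightarrow> \<bar>G t\<bar> \<le> K"
  shows "integrable (lborel \<Otimes>\<^sub>M lborel) (\<lambda>(t, h). indicator {a..b} t * G t * W t h)"
proof (rule lborel_pair.Fubini_integrable)
  have int_W: "integrable lborel (W t)" for t
    using WD by (intro Bochner_Integration.integrable_bound[OF D]) (auto intro: order_trans[OF _ abs_ge_self])
  then show "AE t in lborel. integrable lborel (\<lambda>h. case (t, h) of (t, h) \<Rightarrow> indicator {a..b} t * G t * W t h)"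
    by (auto intro!: integrable_mult_right)
  show "integrable lborel (\<lambda>t. \<integral>h. norm (case (t, h) of (t, h) \<Rightarrow> indicator {a..b} t * G t * W t h) \<partial>lborel)"
  proof (rule Bochner_Integration.integrable_bound)
    show "integrable lborel (\<lambda>t. indicator {a..b} t * (K * (\<integral>h. D h \<partial>lborel)))"
      by (intro integrable_mult_left) (simp add: integrable_indicator_iff emeasure_lborel_Icc_eq)
    have "\<bar>\<integral>h. \<bar>indicator {a..b} t * G t * W t h\<bar> \<partial>lborel\<bar> \<le> \<bar>indicator {a..b} t * (K * (\<integral>h. D h \<partial>lborel))\<bar>"
      for t
    proof -
      have I: "0 \<le> (\<integral>h. \<bar>W t h\<bar> \<partial>lborel)" "(\<integral>h. \<bar>W t h\<bar> \<partial>lborel) \<le> (\<integral>h. D h \<partial>lborel)"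
        using WD by (auto intro!: integral_nonneg_AE integral_mono integrable_abs int_W D)
      show ?thesis
      proof (cases "t \<in> {a..b}")
        case True
        then have "\<bar>G t\<bar> * (\<integral>h. \<bar>W t h\<bar> \<partial>lborel) \<le> K * (\<integral>h. D h \<partial>lborel)"
          using K I by (intro mult_mono) (auto intro: order_trans[OF abs_ge_zero])
        moreover have "0 \<le> K" "0 \<le> (\<integral>h. D h \<partial>lborel)"
          using order_trans[OF abs_ge_zero K[OF True]] order_trans[OF I] by auto
        ultimately show ?thesis
          using True I(1) by (simp add: abs_mult)
      qed simp
    qed
    then show "AE t in lborel. norm (\<integral>h. norm (case (t, h) of (t, h) \<Rightarrow> indicator {a..b} t * G t * W t h) \<partial>lborel)
        \<le> norm (indicator {a..b} t * (K * (\<integral>h. D h \<partial>lborel)))"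
      by simp
  qed measurable
qed measurable

lemma lborel_integral_Icc_swap:
  fixes W :: "real \<Rightarrow> real \<Rightarrow> real" and G :: "real \<Rightarrow> real"
  assumes "(\<lambda>(t, h). W t h) \<in> borel_measurable (lborel \<Otimes>\<^sub>M lborel)"
    and "integrable lborel D" "\<And>t h. \<bar>W t h\<bar> \<le> D h" and G: "continuous_on UNIV G"
  shows "(\<integral>t. (\<integral>h. indicator {a..b} t * G t * W t h \<partial>lborel) \<partial>lborel)
       = (\<integral>h. (\<integral>t. indicator {a..b} t * G t * W t h \<partial>lborel) \<partial>lborel)"
proof -
  have "bounded (G ` {a..b})"
    using compact_imp_bounded[OF compact_continuous_image[OF continuous_on_subset[OF G] compact_Icc]]
    by simp
  then obtain K where K: "\<forall>t\<in>{a..b}. \<bar>G t\<bar> \<le> K"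
    by (auto simp: bounded_iff)
  have "integrable (lborel \<Otimes>\<^sub>M lborel) (\<lambda>(t, h). indicator {a..b} t * G t * W t h)"
    using K by (intro integrable_indicator_Icc_mult_dominated[OF assms(1) borel_measurable_continuous_onI[OF G]
        assms(2,3)]) auto
  then show ?thesis
    by (intro lborel_pair.Fubini_integral[symmetric]) simp
qed

lemma lborel_integral_indicator_Icc:
  fixes f :: "real \<Rightarrow> real"
  assumes "continuous_on {a..b} f"
  shows "(\<integral>t. indicator {a..b} t * f t \<partial>lborel) = integral {a..b} f"
  using set_borel_integral_eq_integral(2)[OF borel_integrable_atLeastAtMost'[OF assms]]
  by (simp add: set_lebesgue_integral_def)

lemma has_integral_real_derivative:
  fixes f f' :: "real \<Rightarrow> real"
  assumes "a \<le> b" "\<And>x. (f has_real_derivative f' x) (at x)"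
  shows "(f' has_integral (f b - f a)) {a..b}"
  by (rule fundamental_theorem_of_calculus[OF assms(1)])
     (auto simp: has_real_derivative_iff_has_vector_derivative[symmetric]
           intro: has_field_derivative_at_within assms(2))

lemma has_integral_periodic_derivative:
  fixes f f' :: "real \<Rightarrow> real"
  assumes "0 \<le> p" "\<And>x. (f has_real_derivative f' x) (at x)" "f p = f 0"
  shows "(f' has_integral 0) {0..p}"
  using has_integral_real_derivative[OF assms(1,2)] assms(3) by simp

lemma has_integral_integral_Icc:
  fixes f :: "real \<Rightarrow> real"
  assumes "continuous_on UNIV f"
  shows "(f has_integral integral {a..b} f) {a..b}"
  using assms continuous_on_subset integrable_continuous_interval integrable_integral by blast

lemma exists_nonneg_if_integral_eq_0:
  fixes f :: "real \<Rightarrow> real"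
  assumes "continuous_on {a..b} f" "a < b" "integral {a..b} f = 0"
  obtains t where "t \<in> {a..b}" "0 \<le> f t"
proof -
  obtain t where t: "t \<in> {a..b}" "\<forall>y\<in>{a..b}. f y \<le> f t"
    using continuous_attains_sup[OF compact_Icc _ assms(1)] \<open>a < b\<close> by auto
  have "integral {a..b} f \<le> integral {a..b} (\<lambda>_. f t)"
    using t assms(1) by (intro integral_le integrable_continuous_interval) auto
  then have "0 \<le> f t"
    using assms(2,3) by (simp add: zero_le_mult_iff)
  with t(1) show thesis
    by (rule that)
qed

lemma abs_diff_le_integral_deriv_sq:
  fixes u :: "real \<Rightarrow> real"
  assumes du: "\<And>x. (u has_real_derivative deriv u x) (at x)" and "continuous_on UNIV (deriv u)"
    and "x \<in> {a..b}" "y \<in> {a..b}"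
  shows "\<bar>u y - u x\<bar> \<le> (b - a + integral {a..b} (\<lambda>t. (deriv u t)\<^sup>2)) / 2"
proof -
  have "\<bar>u y - u x\<bar> \<le> (b - a + integral {a..b} (\<lambda>t. (deriv u t)\<^sup>2)) / 2"
    if "x \<le> y" "x \<in> {a..b}" "y \<in> {a..b}" for x y
  proof -
    have cont: "continuous_on UNIV (\<lambda>t. (1 + (deriv u t)\<^sup>2) / 2)"
      using assms(2) by (intro continuous_intros) auto
    have "\<bar>u y - u x\<bar> = \<bar>integral {x..y} (deriv u)\<bar>"
      using has_integral_real_derivative[OF \<open>x \<le> y\<close> du] by (simp add: integral_unique)
    also have "\<dots> \<le> integral {x..y} (\<lambda>t. (1 + (deriv u t)\<^sup>2) / 2)"
    proof (rule integral_norm_bound_integral[of "deriv u" "{x..y}", unfolded real_norm_def])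
      show "\<bar>deriv u t\<bar> \<le> (1 + (deriv u t)\<^sup>2) / 2" for t
        using zero_le_power2[of "\<bar>deriv u t\<bar> - 1"] by (simp add: power2_eq_square algebra_simps)
    qed (use has_integral_integral_Icc[OF assms(2)] has_integral_integral_Icc[OF cont] in blast)+
    also have "\<dots> \<le> integral {a..b} (\<lambda>t. (1 + (deriv u t)\<^sup>2) / 2)"
      using that has_integral_integral_Icc[OF cont]
      by (intro integral_subset_le) (auto simp: integrable_on_def)
    also have "\<dots> = (b - a + integral {a..b} (\<lambda>t. (deriv u t)\<^sup>2)) / 2"
    proof -
      have "((\<lambda>t. 1) has_integral b - a) {a..b}"
        using has_integral_const_real[of "1::real" a b] that by (simp add: real_scaleR_def)
      moreover have "((\<lambda>t. (deriv u t)\<^sup>2) has_integral integral {a..b} (\<lambda>t. (deriv u t)\<^sup>2)) {a..b}"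
        using assms(2) by (intro has_integral_integral_Icc continuous_intros)
      ultimately show ?thesis
        by (intro integral_unique has_integral_divide has_integral_add)
    qed
    finally show ?thesis .
  qed
  from this[of x y] this[of y x] assms(3,4) show ?thesis
    by (cases "x \<le> y") (auto simp: abs_minus_commute)
qed

lemma integral_sq_le_of_energy_identity:
  fixes v e :: "real \<Rightarrow> real"
  assumes "continuous_on UNIV v" "continuous_on UNIV e" "0 < c" "0 < lam" "lam \<le> 1"
    and energy: "c * integral {a..b} (\<lambda>t. (v t)\<^sup>2) = lam * integral {a..b} (\<lambda>t. e t * v t)"
  shows "integral {a..b} (\<lambda>t. (v t)\<^sup>2) \<le> integral {a..b} (\<lambda>t. (e t)\<^sup>2) / c\<^sup>2"
proof -
  define Q where "Q = integral {a..b} (\<lambda>t. (v t)\<^sup>2)"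
  define E where "E = integral {a..b} (\<lambda>t. (e t)\<^sup>2)"
  define I where "I = integral {a..b} (\<lambda>t. e t * v t)"
  have HQ: "((\<lambda>t. (v t)\<^sup>2) has_integral Q) {a..b}" and HE: "((\<lambda>t. (e t)\<^sup>2) has_integral E) {a..b}"
    and HI: "((\<lambda>t. e t * v t) has_integral I) {a..b}"
    unfolding Q_def E_def I_def using assms(1,2) by (auto intro!: has_integral_integral_Icc continuous_intros)
  have "0 \<le> Q"
    using HQ by (rule has_integral_nonneg) simp
  \<comment> \<open>\<open>c Q = lam I\<close> with \<open>0 < lam \<le> 1\<close> forces \<open>I \<ge> 0\<close>, hence \<open>lam I \<le> I\<close>\<close>
  then have "c * Q \<le> I"
    using energy assms(3-5) unfolding Q_def[symmetric] I_def[symmetric]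
    by (smt (verit) mult_left_le_one_le mult_nonneg_nonneg zero_le_mult_iff)
  also have "I \<le> c / 2 * Q + E / (2 * c)"
  proof (rule has_integral_le[OF HI])
    show "((\<lambda>t. c / 2 * (v t)\<^sup>2 + (e t)\<^sup>2 / (2 * c)) has_integral c / 2 * Q + E / (2 * c)) {a..b}"
      by (intro has_integral_add has_integral_mult_right has_integral_divide HQ HE)
    show "e t * v t \<le> c / 2 * (v t)\<^sup>2 + (e t)\<^sup>2 / (2 * c)" for t
      using zero_le_power2[of "c * v t - e t"] \<open>0 < c\<close>
      by (simp add: field_simps power2_eq_square)
  qed
  finally have "c * (c * Q) \<le> E"
    using \<open>0 < c\<close> by (simp add: field_simps)
  then show ?thesis
    using \<open>0 < c\<close> by (simp add: Q_def E_def field_simps power2_eq_square)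
qed

lemma periodic_plus_of_int:
  fixes f :: "real \<Rightarrow> 'a"
  assumes periodic: "\<And>x. f (x + p) = f x"
  shows "f (x + of_int n * p) = f x"
proof (induction n rule: int_induct[where k = 0])
  case (step1 i)
  then show ?case
    using periodic[of "x + of_int i * p"] by (simp add: algebra_simps)
next
  case (step2 i)
  then show ?case
    using periodic[of "x + of_int (i - 1) * p"] by (simp add: algebra_simps)
qed simp

lemma periodic_representative:
  fixes f :: "real \<Rightarrow> 'a"
  assumes periodic: "\<And>x. f (x + p) = f x" and "0 < p"
  obtains y where "y \<in> {0..p}" "f x = f y"
proof
  define y where "y = p * frac (x / p)"
  have "x = y + of_int \<lfloor>x / p\<rfloor> * p"
    using \<open>0 < p\<close> by (simp add: y_def frac_def algebra_simps)
  then show "f x = f y"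
    using periodic_plus_of_int[of f p, OF periodic] by metis
  show "y \<in> {0..p}"
    using \<open>0 < p\<close> frac_lt_1[of "x / p"] by (simp add: y_def)
qed

lemma periodic_continuous_attains_min_max:
  fixes f :: "real \<Rightarrow> real"
  assumes "continuous_on UNIV f" and periodic: "\<And>x. f (x + p) = f x" and "0 < p"
  obtains x0 x1 where "\<And>x. f x0 \<le> f x" "\<And>x. f x \<le> f x1"
proof -
  have cont: "continuous_on {0..p} f"
    using assms(1) continuous_on_subset by blast
  obtain x0 where x0: "\<forall>y\<in>{0..p}. f x0 \<le> f y"
    using continuous_attains_inf[OF compact_Icc _ cont] \<open>0 < p\<close> by auto
  obtain x1 where x1: "\<forall>y\<in>{0..p}. f y \<le> f x1"
    using continuous_attains_sup[OF compact_Icc _ cont] \<open>0 < p\<close> by auto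
  have "f x0 \<le> f x \<and> f x \<le> f x1" for x
    using periodic_representative[of f p x, OF periodic \<open>0 < p\<close>] x0 x1 by metis
  then show thesis
    using that by blast
qed

lemma periodic_continuous_bounded:
  fixes f :: "real \<Rightarrow> real"
  assumes "continuous_on UNIV f" and "\<And>x. f (x + p) = f x" and "0 < p"
  obtains B where "\<And>x. \<bar>f x\<bar> \<le> B"
proof -
  obtain x0 x1 where lo: "\<And>x. f x0 \<le> f x" and hi: "\<And>x. f x \<le> f x1"
    using periodic_continuous_attains_min_max[of f p, OF assms] by blast
  have "\<bar>f x\<bar> \<le> \<bar>f x0\<bar> + \<bar>f x1\<bar>" for x
    using lo[of x] hi[of x] by arith
  then show thesis by (rule that)
qed

lemma deriv_periodic:
  fixes f :: "real \<Rightarrow> real"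
  assumes "\<And>x. (f has_real_derivative deriv f x) (at x)" and periodic: "\<And>x. f (x + p) = f x"
  shows "deriv f (x + p) = deriv f x"
proof -
  have "((\<lambda>t. f (t + p)) has_real_derivative deriv f (x + p)) (at x)"
    using DERIV_chain2[OF assms(1) DERIV_add[OF DERIV_ident DERIV_const]] by simp
  then show ?thesis
    using assms(1) periodic by (simp add: DERIV_unique)
qed

lemma integral_periodic_window:
  fixes f :: "real \<Rightarrow> real"
  assumes cont: "continuous_on UNIV f" and periodic: "\<And>x. f (x + p) = f x" and "0 \<le> p"
  shows "integral {a..a + p} f = integral {0..p} f"
proof -
  have int: "f integrable_on {x..y}" for x y
    using cont continuous_on_subset integrable_continuous_interval by blast
  have shift: "integral {x + p..y + p} f = integral {x..y} f" for x y
    using integral_shift_Icc_real[of x y f p] periodic by (simp add: o_def add.commute)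
  note combine = Henstock_Kurzweil_Integration.integral_combine[OF _ _ int]
  show ?thesis
  proof (cases "0 \<le> a")
    case True
    have "integral {0..a} f + integral {a..a + p} f = integral {0..p} f + integral {p..a + p} f"
      using combine[of 0 a "a + p"] combine[of 0 p "a + p"] True \<open>0 \<le> p\<close> by simp
    then show ?thesis using shift[of 0 a] by simp
  next
    case False
    have "integral {a..a + p} f + integral {a + p..p} f = integral {a..0} f + integral {0..p} f"
      using combine[of a "a + p" p] combine[of a 0 p] False \<open>0 \<le> p\<close> by simp
    then show ?thesis using shift[of a 0] by simp
  qed
qed

lemma integral_periodic_shift:
  fixes f :: "real \<Rightarrow> real"
  assumes "continuous_on UNIV f" and "\<And>x. f (x + p) = f x" and "0 \<le> p"
  shows "integral {0..p} (\<lambda>t. f (t + h)) = integral {0..p} f"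
proof -
  have "integral {0..p} (\<lambda>t. f (t + h)) = integral {h..h + p} f"
    using integral_shift_Icc_real[of 0 p f h] by (simp add: o_def ac_simps)
  then show ?thesis
    using integral_periodic_window[of f p, OF assms, of h] by simp
qed

lemma holder_on_nonneg_constant:
  assumes "holder_on b S f"
  obtains M where "0 \<le> M" "\<And>x y. x \<in> S \<Longrightarrow> y \<in> S \<Longrightarrow> \<bar>f x - f y\<bar> \<le> M * \<bar>x - y\<bar> powr b"
proof -
  obtain M where M: "\<And>x y. x \<in> S \<Longrightarrow> y \<in> S \<Longrightarrow> \<bar>f x - f y\<bar> \<le> M * \<bar>x - y\<bar> powr b"
    using assms unfolding holder_on_def by blast
  have "\<bar>f x - f y\<bar> \<le> \<bar>M\<bar> * \<bar>x - y\<bar> powr b" if "x \<in> S" "y \<in> S" for x y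
    using order_trans[OF M[OF that] mult_right_mono[OF abs_ge_self powr_ge_zero]] .
  then show thesis
    by (intro that[of "\<bar>M\<bar>"]) auto
qed

lemma holder_on_imp_continuous_on:
  assumes "0 < b" and "holder_on b S f"
  shows "continuous_on S f"
  unfolding continuous_on_def
proof (intro ballI)
  fix x assume "x \<in> S"
  obtain M where M: "\<And>y z. y \<in> S \<Longrightarrow> z \<in> S \<Longrightarrow> \<bar>f y - f z\<bar> \<le> M * \<bar>y - z\<bar> powr b"
    using assms(2) unfolding holder_on_def by blast
  have "\<forall>\<^sub>F y in at x within S. norm (f y - f x) \<le> M * \<bar>y - x\<bar> powr b"
    unfolding eventually_at_filter by (intro always_eventually) (simp add: M \<open>x \<in> S\<close>)
  moreover have "((\<lambda>y. \<bar>y - x\<bar> powr b) \<longlongrightarrow> 0) (at x within S)"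
    by (intro tendsto_zero_powrI[OF tendsto_rabs_zero tendsto_const _ \<open>0 < b\<close>]
        LIM_zero[OF tendsto_ident_at]) simp
  ultimately have "((\<lambda>y. f y - f x) \<longlongrightarrow> 0) (at x within S)"
    by (rule Lim_null_comparison[OF _ tendsto_mult_right_zero])
  then show "(f \<longlongrightarrow> f x) (at x within S)"
    by (simp add: LIM_zero_iff)
qed

lemma loc_holder_on_imp_continuous_on:
  assumes "0 < b" and "open S" and "loc_holder_on b S f"
  shows "continuous_on S f"
proof (intro continuous_at_imp_continuous_on ballI)
  fix x assume "x \<in> S"
  then obtain r where "0 < r" "cball x r \<subseteq> S"
    using \<open>open S\<close> open_contains_cball by blast
  then have "holder_on b (cball x r) f"
    using assms(3) compact_cball unfolding loc_holder_on_def by blast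
  then have "continuous_on (cball x r) f"
    by (rule holder_on_imp_continuous_on[OF assms(1)])
  then show "isCont f x"
    using \<open>0 < r\<close> by (intro continuous_on_interior[of "cball x r"]) auto
qed

lemma holder_on_deriv_if_holder_space:
  fixes u :: "real \<Rightarrow> real"
  assumes "1 < r" "r < 3" and hs: "holder_space r u"
    and periodic: "\<And>x. u (x + p) = u x" and "0 < p"
  shows "\<forall>x. (u has_real_derivative deriv u x) (at x)"
    and "holder_on (min (r - 1) 1) UNIV (deriv u)"
proof -
  have "(\<forall>x. (u has_real_derivative deriv u x) (at x)) \<and> holder_on (min (r - 1) 1) UNIV (deriv u)"
  proof (cases "r \<le> 2")
    case True
    then have "\<lceil>r\<rceil> = 2"
      using \<open>1 < r\<close> by (intro ceiling_unique) auto
    then have "\<forall>x. u differentiable (at x)" "holder_on (r - 1) UNIV (deriv u)"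
      using hs by (auto simp: holder_space_def Let_def)
    then show ?thesis
      using True by (simp add: DERIV_deriv_iff_real_differentiable)
  next
    case False
    then have "\<lceil>r\<rceil> = 3"
      using \<open>r < 3\<close> by (intro ceiling_unique) auto
    then have "\<forall>j<2. \<forall>x. (deriv ^^ j) u differentiable (at x)"
      and hol2: "holder_on (r - 2) UNIV (deriv (deriv u))"
      using hs by (auto simp: holder_space_def Let_def numeral_2_eq_2)
    from this(1)[rule_format, of 0] this(1)[rule_format, of 1] have du: "\<And>x. (u has_real_derivative deriv u x) (at x)"
      and d2u: "\<And>x. (deriv u has_real_derivative deriv (deriv u) x) (at x)"
      by (simp_all add: DERIV_deriv_iff_real_differentiable)
    have "continuous_on UNIV (deriv (deriv u))"
      using False by (intro holder_on_imp_continuous_on[OF _ hol2]) simp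
    moreover have "deriv (deriv u) (x + p) = deriv (deriv u) x" for x
      using deriv_periodic[of "deriv u" p, OF d2u deriv_periodic[of u p, OF du periodic]] .
    ultimately obtain K where "\<And>x. \<bar>deriv (deriv u) x\<bar> \<le> K"
      using periodic_continuous_bounded[of "deriv (deriv u)" p] \<open>0 < p\<close> by metis
    then have "\<bar>deriv u x - deriv u y\<bar> \<le> K * \<bar>x - y\<bar> powr 1" for x y
      using field_differentiable_bound[of UNIV "deriv u" "deriv (deriv u)" K x y] d2u by simp
    then have "holder_on 1 UNIV (deriv u)"
      unfolding holder_on_def by blast
    moreover have "min (r - 1) 1 = 1"
      using False by simp
    ultimately show ?thesis
      using du by simp
  qed
  then show "\<forall>x. (u has_real_derivative deriv u x) (at x)"
    and "holder_on (min (r - 1) 1) UNIV (deriv u)"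
    by auto
qed

lemma abs_taylor_remainder_le:
  fixes u :: "real \<Rightarrow> real"
  assumes "\<And>x. (u has_real_derivative deriv u x) (at x)"
    and "\<And>x. x \<in> closed_segment t (t + h) \<Longrightarrow> \<bar>deriv u x - deriv u t\<bar> \<le> K"
  shows "\<bar>u (t + h) - u t - h * deriv u t\<bar> \<le> \<bar>h\<bar> * K"
proof -
  let ?S = "closed_segment t (t + h)"
  have "(u has_vector_derivative deriv u x) (at x within ?S)" for x
    using assms(1)[of x]
    by (simp add: has_real_derivative_iff_has_vector_derivative has_vector_derivative_at_within)
  moreover have "norm (deriv u x - deriv u t) \<le> K" if "x \<in> ?S" for x
    using assms(2)[OF that] by simp
  ultimately have "norm (u (t + h) - u t - (t + h - t) *\<^sub>R deriv u t) \<le> norm (t + h - t) * K"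
    by (rule vector_differentiable_bound_linearization[OF _ order_refl _ ends_in_segment(1)])
  then show ?thesis
    by simp
qed

section \<open>The kernel of the fractional Laplacian\<close>

text \<open>The correction term \<open>u' t h\<close> on \<open>|h| \<le> 1\<close> is odd in \<open>h\<close>, so it does not change the
  principal value, but it makes the integrand absolutely integrable when \<open>u'\<close> is \<open>b\<close>-Hoelder
  with \<open>b > 2 s - 1\<close>. At \<open>h = 0\<close> the integrand is \<open>0\<close> because \<open>x / 0 = 0\<close>.\<close>

definition frac_integrand :: "real \<Rightarrow> (real \<Rightarrow> real) \<Rightarrow> real \<Rightarrow> real \<Rightarrow> real" where
  "frac_integrand s u t h = (u t - u (t + h) + deriv u t * h * indicator {-1..1} h) / \<bar>h\<bar> powr (1 + 2 * s)"

definition frac_majorant :: "real \<Rightarrow> real \<Rightarrow> real \<Rightarrow> real \<Rightarrow> real \<Rightarrow> real" where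
  "frac_majorant s b M B h =
     indicator {-1..1} h * (M * \<bar>h\<bar> powr (b - 2 * s)) + indicator {x. 1 < \<bar>x\<bar>} h * (2 * B * \<bar>h\<bar> powr (-1 - 2 * s))"

lemma integrable_frac_majorant:
  assumes "0 < s" "2 * s - 1 < b"
  shows "integrable lborel (frac_majorant s b M B)"
proof -
  have "integrable lborel (\<lambda>h. M * (indicator {-1..1} h * \<bar>h\<bar> powr (b - 2 * s))
      + 2 * B * (indicator {x. 1 < \<bar>x\<bar>} h * \<bar>h\<bar> powr (-1 - 2 * s)))"
    using assms
    by (intro Bochner_Integration.integrable_add integrable_mult_right
        integrable_abs_powr_Icc integrable_abs_powr_outside_Icc) auto
  then show ?thesis
    unfolding frac_majorant_def by (simp add: ac_simps)
qed

lemma abs_frac_integrand_le: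
  assumes taylor: "\<bar>u (t + h) - u t - deriv u t * h\<bar> \<le> M * \<bar>h\<bar> powr (1 + b)"
    and bound: "\<And>x. \<bar>u x\<bar> \<le> B"
  shows "\<bar>frac_integrand s u t h\<bar> \<le> frac_majorant s b M B h"
proof (cases "h = 0")
  case False
  then have pos: "0 < \<bar>h\<bar> powr (1 + 2 * s)"
    by simp
  show ?thesis
  proof (cases "\<bar>h\<bar> \<le> 1")
    case True
    then have ind: "indicator {-1..1} h = (1::real)" "indicator {x. 1 < \<bar>x\<bar>} h = (0::real)"
      by (auto simp: indicator_def abs_le_iff)
    then have "frac_integrand s u t h = - (u (t + h) - u t - deriv u t * h) / \<bar>h\<bar> powr (1 + 2 * s)"
      by (simp add: frac_integrand_def)
    then have "\<bar>frac_integrand s u t h\<bar> = \<bar>u (t + h) - u t - deriv u t * h\<bar> / \<bar>h\<bar> powr (1 + 2 * s)"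
      by (simp only: abs_divide abs_minus_cancel) simp
    also have "\<dots> \<le> M * \<bar>h\<bar> powr (1 + b) / \<bar>h\<bar> powr (1 + 2 * s)"
      using taylor pos by (simp add: divide_right_mono)
    also have "\<dots> = M * \<bar>h\<bar> powr (b - 2 * s)"
      using powr_diff[of "\<bar>h\<bar>" "1 + b" "1 + 2 * s"] by simp
    finally show ?thesis
      by (simp add: frac_majorant_def ind)
  next
    case False
    then have ind: "indicator {-1..1} h = (0::real)" "indicator {x. 1 < \<bar>x\<bar>} h = (1::real)"
      by (auto simp: indicator_def abs_le_iff)
    then have "\<bar>frac_integrand s u t h\<bar> = \<bar>u t - u (t + h)\<bar> / \<bar>h\<bar> powr (1 + 2 * s)"
      by (simp add: frac_integrand_def)
    also have "\<dots> \<le> 2 * B / \<bar>h\<bar> powr (1 + 2 * s)"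
      using bound[of t] bound[of "t + h"] pos by (intro divide_right_mono) auto
    also have "\<dots> = 2 * B * \<bar>h\<bar> powr (-1 - 2 * s)"
      using powr_minus_divide[of "\<bar>h\<bar>" "1 + 2 * s"] by (simp add: divide_inverse)
    finally show ?thesis
      by (simp add: frac_majorant_def ind)
  qed
qed (simp add: frac_integrand_def frac_majorant_def)

lemma has_bochner_integral_truncated_odd_kernel:
  fixes s \<epsilon> :: real
  assumes "0 < s" "0 < \<epsilon>"
  shows "has_bochner_integral lborel
     (\<lambda>h. indicator {h. \<epsilon> < \<bar>h\<bar>} h * (h * indicator {-1..1} h / \<bar>h\<bar> powr (1 + 2 * s))) 0"
proof -
  define C where "C h = indicator {h. \<epsilon> < \<bar>h\<bar>} h * (h * indicator {-1..1} h / \<bar>h\<bar> powr (1 + 2 * s))"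
    for h :: real
  have "integrable lborel C"
  proof (rule Bochner_Integration.integrable_bound)
    show "integrable lborel (\<lambda>h::real. indicator {-1..1} h * (1 / \<epsilon> powr (1 + 2 * s)))"
      by (intro integrable_mult_left) (simp add: integrable_indicator_iff)
    have "\<bar>C h\<bar> \<le> indicator {-1..1} h * (1 / \<epsilon> powr (1 + 2 * s))" for h
    proof (cases "\<epsilon> < \<bar>h\<bar> \<and> \<bar>h\<bar> \<le> 1")
      case True
      then have "\<epsilon> powr (1 + 2 * s) \<le> \<bar>h\<bar> powr (1 + 2 * s)"
        using assms by (intro powr_mono2) auto
      then have "\<bar>h\<bar> / \<bar>h\<bar> powr (1 + 2 * s) \<le> 1 / \<epsilon> powr (1 + 2 * s)"
        using True assms(2) by (intro frac_le) auto
      then show ?thesis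
        using True by (auto simp: C_def indicator_def abs_le_iff abs_mult)
    qed (auto simp: C_def indicator_def abs_le_iff)
    then show "AE h in lborel. norm (C h) \<le> norm (indicator {-1..1} h * (1 / \<epsilon> powr (1 + 2 * s)))"
      by (auto intro!: AE_I2 intro: order_trans[OF _ abs_ge_self])
  qed (unfold C_def, measurable)
  moreover have "(\<integral>h. C h \<partial>lborel) = 0"
    by (rule lborel_integral_odd_eq_0) (auto simp: C_def indicator_def)
  ultimately show ?thesis
    unfolding C_def by (simp add: has_bochner_integral_iff)
qed

lemma lborel_integral_truncated_pv:
  fixes u :: "real \<Rightarrow> real"
  assumes "0 < s" "0 < \<epsilon>" and [measurable]: "u \<in> borel_measurable borel"
    and "set_integrable lborel {z. \<epsilon> < \<bar>t - z\<bar>} (\<lambda>z. (u t - u z) / \<bar>t - z\<bar> powr (1 + 2 * s))"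
  shows "(LINT z:{z. \<epsilon> < \<bar>t - z\<bar>}|lborel. (u t - u z) / \<bar>t - z\<bar> powr (1 + 2 * s))
       = (\<integral>h. indicator {h. \<epsilon> < \<bar>h\<bar>} h * frac_integrand s u t h \<partial>lborel)"
proof -
  define f where "f z = indicator {z. \<epsilon> < \<bar>t - z\<bar>} z * ((u t - u z) / \<bar>t - z\<bar> powr (1 + 2 * s))" for z
  define A where "A h = indicator {h. \<epsilon> < \<bar>h\<bar>} h * ((u t - u (t + h)) / \<bar>h\<bar> powr (1 + 2 * s))" for h
  define C where "C h = indicator {h. \<epsilon> < \<bar>h\<bar>} h * (h * indicator {-1..1} h / \<bar>h\<bar> powr (1 + 2 * s))"
    for h :: real
  have f_shift: "(\<lambda>h. f (t + 1 * h)) = A"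
    by (auto simp: fun_eq_iff f_def A_def indicator_def)
  have "integrable lborel f"
    using assms(4) unfolding set_integrable_def f_def[abs_def] by simp
  from lborel_integrable_real_affine[OF this, of 1 t] have "integrable lborel A"
    by (simp only: f_shift)
  moreover have "integrable lborel C" "(\<integral>h. C h \<partial>lborel) = 0"
    using has_bochner_integral_truncated_odd_kernel[OF assms(1,2)] unfolding C_def[abs_def]
    by (auto simp: has_bochner_integral_iff)
  moreover have "indicator {h. \<epsilon> < \<bar>h\<bar>} h * frac_integrand s u t h = A h + deriv u t * C h" for h
    by (simp add: frac_integrand_def A_def C_def diff_divide_distrib add_divide_distrib algebra_simps)
  moreover have "(LINT z:{z. \<epsilon> < \<bar>t - z\<bar>}|lborel. (u t - u z) / \<bar>t - z\<bar> powr (1 + 2 * s))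
      = (\<integral>z. f z \<partial>lborel)"
    by (simp add: set_lebesgue_integral_def f_def)
  moreover have "(\<integral>z. f z \<partial>lborel) = (\<integral>h. A h \<partial>lborel)"
    using lborel_integral_real_affine[of 1 f t] by (simp only: f_shift) simp
  ultimately show ?thesis
    by simp
qed

lemma pv_frac_eq_lborel_integral:
  fixes u :: "real \<Rightarrow> real"
  assumes "0 < s" and [measurable]: "u \<in> borel_measurable borel" and pv: "pv_frac s u t L"
    and D: "integrable lborel D" and dominated: "\<And>h. \<bar>frac_integrand s u t h\<bar> \<le> D h"
  shows "L = (\<integral>h. frac_integrand s u t h \<partial>lborel)"
proof -
  define I where "I \<epsilon> = (LINT z:{z. \<epsilon> < \<bar>t - z\<bar>}|lborel. (u t - u z) / \<bar>t - z\<bar> powr (1 + 2 * s))" for \<epsilon>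
  define \<epsilon> where "\<epsilon> n = inverse (real (Suc n))" for n
  have \<epsilon>_pos: "0 < \<epsilon> n" for n
    by (simp add: \<epsilon>_def)
  have \<epsilon>_lim: "\<epsilon> \<longlonglongrightarrow> 0"
    unfolding \<epsilon>_def by (rule LIMSEQ_inverse_real_of_nat)
  have "(I \<longlongrightarrow> L) (at_right 0)"
    using pv by (simp add: pv_frac_def I_def[abs_def])
  moreover have "filterlim \<epsilon> (at_right 0) sequentially"
    by (rule tendsto_imp_filterlim_at_right[OF \<epsilon>_lim]) (simp add: \<epsilon>_pos)
  ultimately have "(\<lambda>n. I (\<epsilon> n)) \<longlonglongrightarrow> L"
    by (rule filterlim_compose)
  moreover have "I (\<epsilon> n) = (\<integral>h. indicator {h. \<epsilon> n < \<bar>h\<bar>} h * frac_integrand s u t h \<partial>lborel)" for n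
    using pv \<epsilon>_pos[of n] unfolding I_def pv_frac_def
    by (intro lborel_integral_truncated_pv[OF \<open>0 < s\<close>]) simp_all
  moreover have "frac_integrand s u t \<in> borel_measurable lborel"
    unfolding frac_integrand_def[abs_def] by measurable
  then have "(\<lambda>n. \<integral>h. indicator {h. \<epsilon> n < \<bar>h\<bar>} h * frac_integrand s u t h \<partial>lborel)
      \<longlonglongrightarrow> (\<integral>h. frac_integrand s u t h \<partial>lborel)"
    using D dominated \<epsilon>_lim by (rule tendsto_lborel_integral_truncation)
  ultimately show ?thesis
    using LIMSEQ_unique by auto
qed

section \<open>Periodic functions with Hoelder continuous derivative\<close>

locale periodic_C1_holder =
  fixes p b :: real and u :: "real \<Rightarrow> real"
  assumes period_pos: "0 < p"
    and periodic: "\<And>x. u (x + p) = u x"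
    and has_deriv: "\<And>x. (u has_real_derivative deriv u x) (at x)"
    and holder_exponent_pos: "0 < b"
    and holder_deriv: "holder_on b UNIV (deriv u)"
begin

lemma continuous_on_u: "continuous_on UNIV u"
  using has_deriv by (meson DERIV_isCont continuous_at_imp_continuous_on)

lemma continuous_on_deriv: "continuous_on UNIV (deriv u)"
  by (rule holder_on_imp_continuous_on[OF holder_exponent_pos holder_deriv])

lemma periodic_deriv: "deriv u (x + p) = deriv u x"
  by (rule deriv_periodic[of u p, OF has_deriv periodic])

lemma u_bounded:
  obtains B where "\<And>x. \<bar>u x\<bar> \<le> B"
  using periodic_continuous_bounded[of u p, OF continuous_on_u periodic period_pos] by blast

lemma taylor_remainder:
  obtains M where "0 \<le> M" "\<And>t h. \<bar>u (t + h) - u t - deriv u t * h\<bar> \<le> M * \<bar>h\<bar> powr (1 + b)"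
proof -
  obtain M where "0 \<le> M" and M: "\<And>x y. \<bar>deriv u x - deriv u y\<bar> \<le> M * \<bar>x - y\<bar> powr b"
    using holder_on_nonneg_constant[OF holder_deriv] by (metis UNIV_I)
  have "\<bar>u (t + h) - u t - deriv u t * h\<bar> \<le> M * \<bar>h\<bar> powr (1 + b)" for t h
  proof -
    have "\<bar>deriv u x - deriv u t\<bar> \<le> M * \<bar>h\<bar> powr b" if "x \<in> closed_segment t (t + h)" for x
    proof -
      have "\<bar>x - t\<bar> \<le> \<bar>h\<bar>"
        using dist_in_closed_segment[OF that] by (simp add: dist_real_def)
      then have "M * \<bar>x - t\<bar> powr b \<le> M * \<bar>h\<bar> powr b"
        using \<open>0 \<le> M\<close> holder_exponent_pos by (intro mult_left_mono powr_mono2) auto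
      then show ?thesis
        using M[of x t] by linarith
    qed
    then have "\<bar>u (t + h) - u t - h * deriv u t\<bar> \<le> \<bar>h\<bar> * (M * \<bar>h\<bar> powr b)"
      by (rule abs_taylor_remainder_le[OF has_deriv])
    also have "\<dots> = M * \<bar>h\<bar> powr (1 + b)"
      by (cases "h = 0") (simp_all add: powr_add)
    finally show ?thesis
      by (simp add: mult.commute)
  qed
  with \<open>0 \<le> M\<close> show thesis
    by (rule that)
qed

lemma has_integral_deriv: "(deriv u has_integral 0) {0..p}"
  using has_integral_periodic_derivative[OF _ has_deriv] period_pos periodic[of 0] by simp

lemma integral_deriv_mult_shift_odd:
  "integral {0..p} (\<lambda>t. deriv u t * u (t - h)) = - integral {0..p} (\<lambda>t. deriv u t * u (t + h))"
proof -
  have shift: "continuous_on UNIV (\<lambda>t. t + k)" for k :: real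
    by (rule continuous_on_add[OF continuous_on_id continuous_on_const])
  have cont_shift: "continuous_on UNIV (\<lambda>t. u (t + k))" "continuous_on UNIV (\<lambda>t. deriv u (t + k))" for k
    using continuous_on_compose2[OF continuous_on_u shift] continuous_on_compose2[OF continuous_on_deriv shift]
    by auto
  have int: "f integrable_on {0..p}" if "continuous_on UNIV f" for f :: "real \<Rightarrow> real"
    using has_integral_integral_Icc[OF that] by blast
  have by_parts: "integral {0..p} (\<lambda>t. deriv u (t + k) * u t) = - integral {0..p} (\<lambda>t. deriv u t * u (t + k))"
    for k
  proof -
    have "((\<lambda>t. u (t + k)) has_real_derivative deriv u (t + k)) (at t)" for t
      using DERIV_chain2[OF has_deriv DERIV_add[OF DERIV_ident DERIV_const]] by simp
    then have "((\<lambda>t. u (t + k) * u t) has_real_derivative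
        deriv u (t + k) * u t + deriv u t * u (t + k)) (at t)" for t
      using has_deriv by (rule DERIV_mult)
    then have "((\<lambda>t. deriv u (t + k) * u t + deriv u t * u (t + k)) has_integral 0) {0..p}"
      by (rule has_integral_periodic_derivative[OF less_imp_le[OF period_pos]])
        (use periodic[of k] periodic[of 0] in \<open>simp add: add.commute\<close>)
    then have "integral {0..p} (\<lambda>t. deriv u (t + k) * u t + deriv u t * u (t + k)) = 0"
      by (rule integral_unique)
    moreover have "integral {0..p} (\<lambda>t. deriv u (t + k) * u t + deriv u t * u (t + k)) =
        integral {0..p} (\<lambda>t. deriv u (t + k) * u t) + integral {0..p} (\<lambda>t. deriv u t * u (t + k))"
      using cont_shift[of k] continuous_on_u continuous_on_deriv
      by (intro integral_add int continuous_on_mult)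
    ultimately show ?thesis
      by linarith
  qed
  have "continuous_on UNIV (\<lambda>t. deriv u t * u (t + h))"
    using continuous_on_deriv cont_shift(1) by (rule continuous_on_mult)
  then have "integral {0..p} (\<lambda>t. deriv u (t - h) * u t) = integral {0..p} (\<lambda>t. deriv u t * u (t + h))"
    using integral_periodic_shift[of "\<lambda>t. deriv u t * u (t + h)" p "- h"] period_pos
      periodic_deriv periodic[of "_ + h"]
    by (simp add: ac_simps)
  then show ?thesis
    using by_parts[of "- h"] by simp
qed

lemma borel_measurable_u[measurable]: "u \<in> borel_measurable borel"
  by (rule borel_measurable_continuous_onI[OF continuous_on_u])

lemma borel_measurable_deriv[measurable]: "deriv u \<in> borel_measurable borel"
  by (rule borel_measurable_continuous_onI[OF continuous_on_deriv])

lemma frac_integrand_dominated: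
  assumes "0 < s" "2 * s - 1 < b"
  obtains D where "integrable lborel D" "\<And>t h. \<bar>frac_integrand s u t h\<bar> \<le> D h"
proof -
  obtain M where "\<And>t h. \<bar>u (t + h) - u t - deriv u t * h\<bar> \<le> M * \<bar>h\<bar> powr (1 + b)"
    using taylor_remainder by metis
  moreover obtain B where "\<And>x. \<bar>u x\<bar> \<le> B"
    using u_bounded by metis
  ultimately show thesis
    using that[OF integrable_frac_majorant[OF assms]] abs_frac_integrand_le by metis
qed

lemma pv_frac_eq_integral:
  assumes "0 < s" "2 * s - 1 < b" and "pv_frac s u t L"
  shows "L = (\<integral>h. frac_integrand s u t h \<partial>lborel)"
proof -
  obtain D where "integrable lborel D" "\<And>t h. \<bar>frac_integrand s u t h\<bar> \<le> D h"
    using frac_integrand_dominated[OF assms(1,2)] by metis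
  then show ?thesis
    using pv_frac_eq_lborel_integral[OF assms(1) borel_measurable_u assms(3)] by metis
qed

lemma continuous_on_frac_integrand: "continuous_on UNIV (\<lambda>t. frac_integrand s u t h)"
proof (cases "h = 0")
  case False
  have "continuous_on UNIV (\<lambda>t. u (t + h))"
    by (rule continuous_on_compose2[OF continuous_on_u continuous_on_add[OF continuous_on_id continuous_on_const]])
      simp
  then show ?thesis
    unfolding frac_integrand_def using False continuous_on_u continuous_on_deriv
    by (intro continuous_intros) auto
qed (simp add: frac_integrand_def)

lemma integral_frac_integrand_eq_0: "integral {0..p} (\<lambda>t. frac_integrand s u t h) = 0"
proof -
  have "((\<lambda>t. u (t + h)) has_integral integral {0..p} u) {0..p}"
    using has_integral_integral_Icc[of "\<lambda>t. u (t + h)" 0 p] continuous_on_frac_integrand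
      integral_periodic_shift[of u p h, OF continuous_on_u periodic] period_pos
      continuous_on_compose2[OF continuous_on_u continuous_on_add[OF continuous_on_id continuous_on_const]]
    by simp
  then have "((\<lambda>t. (u t - u (t + h) + deriv u t * (h * indicator {-1..1} h)) / \<bar>h\<bar> powr (1 + 2 * s))
      has_integral (integral {0..p} u - integral {0..p} u + 0 * (h * indicator {-1..1} h))
        / \<bar>h\<bar> powr (1 + 2 * s)) {0..p}"
    using has_integral_integral_Icc[OF continuous_on_u] has_integral_deriv
    by (intro has_integral_divide has_integral_add has_integral_diff has_integral_mult_left)
  then have "((\<lambda>t. frac_integrand s u t h) has_integral 0) {0..p}"
    by (simp add: frac_integrand_def mult.assoc)
  then show ?thesis
    by (rule integral_unique)
qed

lemma integral_frac_integrand_deriv_odd: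
  "integral {0..p} (\<lambda>t. frac_integrand s u t (- h) * deriv u t)
     = - integral {0..p} (\<lambda>t. frac_integrand s u t h * deriv u t)"
proof -
  define \<phi> where "\<phi> h = integral {0..p} (\<lambda>t. deriv u t * u (t + h))" for h
  define Q where "Q = integral {0..p} (\<lambda>t. deriv u t * deriv u t)"
  have shift: "continuous_on UNIV (\<lambda>t. u (t + h))" for h
    by (rule continuous_on_compose2[OF continuous_on_u continuous_on_add[OF continuous_on_id continuous_on_const]])
      simp
  have "((\<lambda>t. u t * u t / 2) has_real_derivative deriv u t * u t) (at t)" for t
    by (auto intro!: derivative_eq_intros has_deriv simp: field_simps)
  then have "((\<lambda>t. deriv u t * u t) has_integral 0) {0..p}"
    by (rule has_integral_periodic_derivative[OF less_imp_le[OF period_pos]]) (simp add: periodic[of 0, simplified])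
  note u_deriv = this
  have formula: "integral {0..p} (\<lambda>t. frac_integrand s u t h * deriv u t)
      = (h * indicator {-1..1} h * Q - \<phi> h) / \<bar>h\<bar> powr (1 + 2 * s)" for h
  proof -
    have "((\<lambda>t. (deriv u t * u t - deriv u t * u (t + h) + deriv u t * deriv u t * (h * indicator {-1..1} h))
        / \<bar>h\<bar> powr (1 + 2 * s)) has_integral (0 - \<phi> h + Q * (h * indicator {-1..1} h)) / \<bar>h\<bar> powr (1 + 2 * s))
        {0..p}"
      unfolding \<phi>_def Q_def using u_deriv shift continuous_on_deriv
      by (intro has_integral_divide has_integral_add has_integral_diff has_integral_mult_left
          has_integral_integral_Icc continuous_on_mult)
    then show ?thesis
      by (intro integral_unique) (simp add: frac_integrand_def field_simps)
  qed
  have "\<phi> (- h) = - \<phi> h"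
    using integral_deriv_mult_shift_odd[of h] by (simp add: \<phi>_def)
  moreover have "indicator {-1..1} (- h) = (indicator {-1..1} h :: real)"
    by (auto simp: indicator_def)
  ultimately show ?thesis
    unfolding formula by (simp add: minus_divide_left algebra_simps)
qed

lemma integral_pv_frac_mult:
  assumes "0 < s" "2 * s - 1 < b" and pv: "\<And>t. pv_frac s u t (L t)"
    and "continuous_on UNIV L" and "continuous_on UNIV G"
  shows "integral {0..p} (\<lambda>t. L t * G t)
       = (\<integral>h. integral {0..p} (\<lambda>t. frac_integrand s u t h * G t) \<partial>lborel)"
proof -
  obtain D where "integrable lborel D" "\<And>t h. \<bar>frac_integrand s u t h\<bar> \<le> D h"
    using frac_integrand_dominated[OF assms(1,2)] by metis
  moreover have "(\<lambda>(t, h). frac_integrand s u t h) \<in> borel_measurable (lborel \<Otimes>\<^sub>M lborel)"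
    unfolding frac_integrand_def by measurable
  ultimately have swap: "(\<integral>t. (\<integral>h. indicator {0..p} t * G t * frac_integrand s u t h \<partial>lborel) \<partial>lborel)
      = (\<integral>h. (\<integral>t. indicator {0..p} t * G t * frac_integrand s u t h \<partial>lborel) \<partial>lborel)"
    using lborel_integral_Icc_swap assms(5) by blast
  have inner: "(\<integral>h. indicator {0..p} t * G t * frac_integrand s u t h \<partial>lborel) = indicator {0..p} t * (L t * G t)"
    for t
  proof -
    have "(\<integral>h. indicator {0..p} t * G t * frac_integrand s u t h \<partial>lborel)
        = indicator {0..p} t * G t * (\<integral>h. frac_integrand s u t h \<partial>lborel)"
      by (rule integral_mult_right_zero)
    then show ?thesis
      using pv_frac_eq_integral[OF assms(1,2) pv[of t]] by simp
  qed
  have "continuous_on {0..p} (\<lambda>t. L t * G t)"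
    using assms(4,5) by (intro continuous_on_mult) (auto intro: continuous_on_subset)
  then have "(\<integral>t. (\<integral>h. indicator {0..p} t * G t * frac_integrand s u t h \<partial>lborel) \<partial>lborel)
      = integral {0..p} (\<lambda>t. L t * G t)"
    by (simp only: inner lborel_integral_indicator_Icc)
  moreover have "(\<integral>t. indicator {0..p} t * G t * frac_integrand s u t h \<partial>lborel)
      = integral {0..p} (\<lambda>t. frac_integrand s u t h * G t)" for h
  proof -
    have "continuous_on {0..p} (\<lambda>t. frac_integrand s u t h * G t)"
      using continuous_on_frac_integrand assms(5) by (intro continuous_on_mult) (auto intro: continuous_on_subset)
    from lborel_integral_indicator_Icc[OF this] show ?thesis
      by (simp add: ac_simps)
  qed
  ultimately show ?thesis
    using swap by simp
qed

lemma pv_frac_orthogonal: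
  assumes "0 < s" "2 * s - 1 < b" and "\<And>t. pv_frac s u t (L t)" and "continuous_on UNIV L"
  shows "integral {0..p} L = 0" and "integral {0..p} (\<lambda>t. L t * deriv u t) = 0"
proof -
  show "integral {0..p} L = 0"
    using integral_pv_frac_mult[OF assms, of "\<lambda>_. 1"] integral_frac_integrand_eq_0 by simp
  have "integral {0..p} (\<lambda>t. L t * deriv u t)
      = (\<integral>h. integral {0..p} (\<lambda>t. frac_integrand s u t h * deriv u t) \<partial>lborel)"
    by (rule integral_pv_frac_mult[OF assms continuous_on_deriv])
  also have "\<dots> = 0"
    by (rule lborel_integral_odd_eq_0) (rule integral_frac_integrand_deriv_odd)
  finally show "integral {0..p} (\<lambda>t. L t * deriv u t) = 0" .
qed

lemma has_pos_frac_lap_orthogonal: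
  assumes "0 < s" "2 * s - 1 < b" and lap: "\<And>t. has_pos_frac_lap s u t (V t)"
    and "continuous_on UNIV V"
  shows "integral {0..p} V = 0" and "integral {0..p} (\<lambda>t. V t * deriv u t) = 0"
proof -
  have "integral {0..p} V = 0 \<and> integral {0..p} (\<lambda>t. V t * deriv u t) = 0"
  proof (cases "C1 s = 0")
    \<comment> \<open>\<open>C1 s\<close> is positive, but the degenerate case is trivial and saves computing it\<close>
    case True
    then have "V = (\<lambda>_. 0)"
      using lap by (auto simp: has_pos_frac_lap_def fun_eq_iff)
    then show ?thesis
      by simp
  next
    case False
    define L where "L t = - V t / C1 s" for t
    have "pv_frac s u t (L t)" for t
    proof -
      obtain l where "pv_frac s u t l" "V t = - (C1 s * l)"
        using lap[of t] by (auto simp: has_pos_frac_lap_def)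
      then show ?thesis
        using False by (simp add: L_def)
    qed
    moreover have "continuous_on UNIV L"
      unfolding L_def using assms(4) False by (intro continuous_intros) auto
    ultimately have "integral {0..p} L = 0" "integral {0..p} (\<lambda>t. L t * deriv u t) = 0"
      using pv_frac_orthogonal[OF assms(1,2)] by blast+
    moreover have "V = (\<lambda>t. - C1 s * L t)"
      using False by (simp add: L_def fun_eq_iff)
    ultimately show ?thesis
      by (simp add: mult.assoc)
  qed
  then show "integral {0..p} V = 0" "integral {0..p} (\<lambda>t. V t * deriv u t) = 0"
    by auto
qed

lemma frac_equation_integrals:
  assumes "0 < s" "2 * s - 1 < b" and "\<And>t. has_pos_frac_lap s u t (V t)" "continuous_on UNIV V"
    and equation: "\<And>t. V t + c * deriv u t = F t"
  shows "integral {0..p} F = 0"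
    and "integral {0..p} (\<lambda>t. F t * deriv u t) = c * integral {0..p} (\<lambda>t. (deriv u t)\<^sup>2)"
proof -
  note orth = has_pos_frac_lap_orthogonal[OF assms(1-4)]
  have HV: "(V has_integral 0) {0..p}" "((\<lambda>t. V t * deriv u t) has_integral 0) {0..p}"
    using has_integral_integral_Icc[OF assms(4), of 0 p] orth(1)
      has_integral_integral_Icc[OF continuous_on_mult[OF assms(4) continuous_on_deriv], of 0 p] orth(2)
    by auto
  have "((\<lambda>t. V t + c * deriv u t) has_integral 0 + c * 0) {0..p}"
    by (intro has_integral_add has_integral_mult_right HV has_integral_deriv)
  then show "integral {0..p} F = 0"
    using equation by (simp add: integral_unique)
  have "((\<lambda>t. V t * deriv u t + c * (deriv u t)\<^sup>2) has_integral
      0 + c * integral {0..p} (\<lambda>t. (deriv u t)\<^sup>2)) {0..p}"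
    using continuous_on_deriv
    by (intro has_integral_add has_integral_mult_right HV has_integral_integral_Icc continuous_intros)
  moreover have "V t * deriv u t + c * (deriv u t)\<^sup>2 = F t * deriv u t" for t
    by (simp add: equation[of t, symmetric] power2_eq_square algebra_simps)
  ultimately show "integral {0..p} (\<lambda>t. F t * deriv u t) = c * integral {0..p} (\<lambda>t. (deriv u t)\<^sup>2)"
    by (simp add: integral_unique)
qed

lemma has_integral_comp_mult_deriv:
  assumes "continuous_on {\<alpha>..\<beta>} g" and range: "\<And>t. u t \<in> {\<alpha><..<\<beta>}"
  shows "((\<lambda>t. g (u t) * deriv u t) has_integral 0) {0..p}"
proof -
  define G where "G x = integral {\<alpha>..x} g" for x
  have G_deriv: "(G has_real_derivative g y) (at y)" if "y \<in> {\<alpha><..<\<beta>}" for y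
  proof -
    have "(G has_real_derivative g y) (at y within {\<alpha>..\<beta>})"
      unfolding G_def using that by (intro integral_has_real_derivative[OF assms(1)]) auto
    then have "(G has_real_derivative g y) (at y within {\<alpha><..<\<beta>})"
      by (rule DERIV_subset) auto
    then show ?thesis
      using at_within_open[OF that] by simp
  qed
  have "((\<lambda>t. G (u t)) has_real_derivative g (u t) * deriv u t) (at t)" for t
    by (rule DERIV_chain2[OF G_deriv[OF range] has_deriv])
  then show ?thesis
    by (rule has_integral_periodic_derivative[OF less_imp_le[OF period_pos]]) (simp add: periodic[of 0, simplified])
qed

end

section \<open>A priori bounds\<close>

locale periodic_frac_solution = periodic_C1_holder +
  fixes s c lam :: real and e g V :: "real \<Rightarrow> real"
  assumes order: "0 < s" "2 * s - 1 < b"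
    and c_pos: "0 < c" and lam: "0 < lam" "lam \<le> 1"
    and frac_lap: "\<And>t. has_pos_frac_lap s u t (V t)" and continuous_V: "continuous_on UNIV V"
    and equation: "\<And>t. V t + c * deriv u t = lam * (e t + g (u t))"
    and continuous_e: "continuous_on UNIV e" and continuous_g: "continuous_on {0<..} g"
    and positive: "\<And>t. 0 < u t"
begin

lemma continuous_g_u: "continuous_on UNIV (\<lambda>t. g (u t))"
  using continuous_on_compose2[OF continuous_g continuous_on_u] positive by auto

lemma integral_g_u: "integral {0..p} (\<lambda>t. g (u t)) = - integral {0..p} e"
proof -
  have "((\<lambda>t. lam * (e t + g (u t))) has_integral lam * (integral {0..p} e + integral {0..p} (\<lambda>t. g (u t))))
      {0..p}"
    using continuous_e continuous_g_u
    by (intro has_integral_mult_right has_integral_add has_integral_integral_Icc)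
  then have "lam * (integral {0..p} e + integral {0..p} (\<lambda>t. g (u t))) = 0"
    using frac_equation_integrals(1)[OF order frac_lap continuous_V equation] integral_unique by metis
  then show ?thesis
    using lam by simp
qed

lemma exists_below_threshold:
  assumes "\<And>x. T \<le> x \<Longrightarrow> g x + integral {0..p} e / p < 0"
  obtains t0 where "t0 \<in> {0..p}" "u t0 < T"
proof -
  define m where "m = integral {0..p} e / p"
  have "((\<lambda>t. g (u t) + m) has_integral 0) {0..p}"
    using has_integral_add[OF has_integral_integral_Icc[OF continuous_g_u] has_integral_const_real[of m 0 p]]
      period_pos
    by (simp add: integral_g_u m_def)
  moreover have "continuous_on {0..p} (\<lambda>t. g (u t) + m)"
    using continuous_g_u by (auto intro!: continuous_intros intro: continuous_on_subset)
  ultimately obtain t0 where t0: "t0 \<in> {0..p}" "0 \<le> g (u t0) + m"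
    using exists_nonneg_if_integral_eq_0[of 0 p "\<lambda>t. g (u t) + m"] period_pos integral_unique by blast
  have "u t0 < T"
  proof (rule ccontr)
    assume "\<not> u t0 < T"
    then show False
      using assms[of "u t0"] t0(2) by (simp add: m_def)
  qed
  with t0(1) show thesis
    by (rule that)
qed

lemma energy_identity:
  "c * integral {0..p} (\<lambda>t. (deriv u t)\<^sup>2) = lam * integral {0..p} (\<lambda>t. e t * deriv u t)"
proof -
  obtain t0 t1 where min: "\<And>t. u t0 \<le> u t" and max: "\<And>t. u t \<le> u t1"
    using periodic_continuous_attains_min_max[of u p, OF continuous_on_u periodic period_pos] by blast
  have "u t \<in> {u t0 / 2<..<u t1 + 1}" for t
    using min[of t] max[of t] positive[of t0] by auto
  moreover have "continuous_on {u t0 / 2..u t1 + 1} g"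
    by (rule continuous_on_subset[OF continuous_g]) (use positive[of t0] in auto)
  ultimately have "((\<lambda>t. g (u t) * deriv u t) has_integral 0) {0..p}"
    by (intro has_integral_comp_mult_deriv)
  then have "((\<lambda>t. lam * (e t * deriv u t) + lam * (g (u t) * deriv u t)) has_integral
      lam * integral {0..p} (\<lambda>t. e t * deriv u t) + lam * 0) {0..p}"
    using continuous_e continuous_on_deriv
    by (intro has_integral_add has_integral_mult_right has_integral_integral_Icc continuous_intros)
  then have "integral {0..p} (\<lambda>t. lam * (e t + g (u t)) * deriv u t) = lam * integral {0..p} (\<lambda>t. e t * deriv u t)"
    by (simp add: integral_unique algebra_simps)
  then show ?thesis
    using frac_equation_integrals(2)[OF order frac_lap continuous_V equation] by simp
qed

lemma integral_deriv_sq_le: "integral {0..p} (\<lambda>t. (deriv u t)\<^sup>2) \<le> integral {0..p} (\<lambda>t. (e t)\<^sup>2) / c\<^sup>2"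
  using continuous_on_deriv continuous_e c_pos lam energy_identity
  by (rule integral_sq_le_of_energy_identity)

lemma upper_bound:
  assumes "\<And>x. T \<le> x \<Longrightarrow> g x + integral {0..p} e / p < 0"
  shows "u t \<le> T + (p + integral {0..p} (\<lambda>t. (e t)\<^sup>2) / c\<^sup>2) / 2"
proof -
  obtain t0 where t0: "t0 \<in> {0..p}" "u t0 < T"
    using exists_below_threshold[OF assms] by blast
  obtain y where y: "y \<in> {0..p}" "u t = u y"
    using periodic_representative[of u p t, OF periodic period_pos] by blast
  have "\<bar>u y - u t0\<bar> \<le> (p - 0 + integral {0..p} (\<lambda>t. (deriv u t)\<^sup>2)) / 2"
    by (rule abs_diff_le_integral_deriv_sq[OF has_deriv continuous_on_deriv t0(1) y(1)])
  also have "\<dots> \<le> (p + integral {0..p} (\<lambda>t. (e t)\<^sup>2) / c\<^sup>2) / 2"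
    using integral_deriv_sq_le by (intro divide_right_mono) auto
  finally show ?thesis
    using t0(2) y(2) by linarith
qed

end

lemma classical_solution_periodic_frac_solution:
  fixes e g u :: "real \<Rightarrow> real"
  assumes s: "1/2 < s" "s < 1" and a: "0 < a" "a < 1" and "0 < c" "0 < p" "0 < lam" "lam \<le> 1"
    and e: "continuous_on UNIV e" and g: "continuous_on {0<..} g"
    and u_pos: "\<And>t. 0 < u t" and u_periodic: "\<And>t. u (t + p) = u t"
    and sol: "classical_solution s a c lam g e u"
  shows "periodic_frac_solution p (min (2 * s + a - 1) 1) u s c lam e g
           (\<lambda>t. lam * e t + lam * g (u t) - c * deriv u t)"
proof -
  have "holder_space (2 * s + a) u"
    and eqn: "\<And>t. \<exists>v. has_pos_frac_lap s u t v \<and> v + c * deriv u t - lam * g (u t) = lam * e t"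
    using sol unfolding classical_solution_def by auto
  from holder_on_deriv_if_holder_space[OF _ _ this(1) u_periodic \<open>0 < p\<close>]
  interpret periodic_C1_holder p "min (2 * s + a - 1) 1" u
    using s a \<open>0 < p\<close> u_periodic by unfold_locales auto
  have "has_pos_frac_lap s u t (lam * e t + lam * g (u t) - c * deriv u t)" for t
  proof -
    obtain v where "has_pos_frac_lap s u t v" "v + c * deriv u t - lam * g (u t) = lam * e t"
      using eqn[of t] by blast
    moreover from this(2) have "v = lam * e t + lam * g (u t) - c * deriv u t"
      by (simp add: algebra_simps)
    ultimately show ?thesis
      by simp
  qed
  moreover have "continuous_on UNIV (\<lambda>t. g (u t))"
    using continuous_on_compose2[OF g continuous_on_u] u_pos by auto
  ultimately show ?thesis
    using assms continuous_on_deriv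
    by unfold_locales (auto intro!: continuous_intros simp: algebra_simps)
qed

lemma classical_solution_bounds:
  fixes e g u :: "real \<Rightarrow> real"
  assumes "1/2 < s" "s < 1" "0 < a" "a < 1" "0 < c" "0 < p" "0 < lam" "lam \<le> 1"
    and "continuous_on UNIV e" "continuous_on {0<..} g"
    and "\<And>t. 0 < u t" "\<And>t. u (t + p) = u t" "classical_solution s a c lam g e u"
    and T: "\<And>x. T \<le> x \<Longrightarrow> g x + integral {0..p} e / p < 0"
  shows "u t \<le> T + (p + integral {0..p} (\<lambda>t. (e t)\<^sup>2) / c\<^sup>2) / 2"
    and "sqrt (integral {0..p} (\<lambda>t. (deriv u t)\<^sup>2)) \<le> 1 / c * sqrt (integral {0..p} (\<lambda>t. (e t)\<^sup>2))"
proof -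
  interpret periodic_frac_solution p "min (2 * s + a - 1) 1" u s c lam e g
    "\<lambda>t. lam * e t + lam * g (u t) - c * deriv u t"
    by (rule classical_solution_periodic_frac_solution) (use assms in auto)
  show "u t \<le> T + (p + integral {0..p} (\<lambda>t. (e t)\<^sup>2) / c\<^sup>2) / 2"
    by (rule upper_bound[OF T])
  have "sqrt (integral {0..p} (\<lambda>t. (deriv u t)\<^sup>2)) \<le> sqrt (integral {0..p} (\<lambda>t. (e t)\<^sup>2) / c\<^sup>2)"
    using integral_deriv_sq_le by simp
  then show "sqrt (integral {0..p} (\<lambda>t. (deriv u t)\<^sup>2)) \<le> 1 / c * sqrt (integral {0..p} (\<lambda>t. (e t)\<^sup>2))"
    using c_pos by (simp add: real_sqrt_divide)
qed

theorem lemma4p8: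
  fixes s a c :: real and e g :: "real \<Rightarrow> real"
  assumes s: "1/2 < s" "s < 1"
    and a: "0 < a" "a < 1"
    and c: "c > 0"
    and e_hol: "holder_on a UNIV e"
    and e_per: "\<forall>t. e (t + 2 * pi) = e t"
    and e_mean: "integral {0..2*pi} e / (2 * pi) > 0"
    and g_hol: "loc_holder_on a {0<..} g"
    and G1: "Limsup at_top (\<lambda>t. ereal (g t + integral {0..2*pi} e / (2 * pi))) < 0"
  shows "\<exists>R>0. \<exists>C>0. \<forall>lam u. 0 < lam \<and> lam < 1 \<and> (\<forall>t. u t > 0) \<and>
            (\<forall>t. u (t + 2 * pi) = u t) \<and> classical_solution s a c lam g e u \<longrightarrow>
            (\<forall>t. 0 < u t \<and> u t < R) \<and>
            sqrt (integral {0..2*pi} (\<lambda>t. (deriv u t)\<^sup>2))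
              \<le> C * sqrt (integral {0..2*pi} (\<lambda>t. (e t)\<^sup>2))"
proof -
  have e: "continuous_on UNIV e"
    by (rule holder_on_imp_continuous_on[OF a(1) e_hol])
  have g: "continuous_on {0<..} g"
    by (rule loc_holder_on_imp_continuous_on[OF a(1) _ g_hol]) simp
  obtain T where T: "\<And>x. T \<le> x \<Longrightarrow> g x + integral {0..2*pi} e / (2 * pi) < 0"
    using Limsup_lessD[OF G1] unfolding eventually_at_top_linorder by auto
  define E where "E = integral {0..2*pi} (\<lambda>t. (e t)\<^sup>2)"
  define R where "R = max 1 (T + (2 * pi + E / c\<^sup>2) / 2 + 1)"
  have bounds: "u t < R \<and> sqrt (integral {0..2*pi} (\<lambda>t. (deriv u t)\<^sup>2)) \<le> 1 / c * sqrt E"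
    if "0 < lam" "lam < 1" "\<forall>t. u t > 0" "\<forall>t. u (t + 2 * pi) = u t" "classical_solution s a c lam g e u"
    for lam u t
  proof -
    have "u t \<le> T + (2 * pi + E / c\<^sup>2) / 2"
      and "sqrt (integral {0..2*pi} (\<lambda>t. (deriv u t)\<^sup>2)) \<le> 1 / c * sqrt E"
      unfolding E_def using that by (intro classical_solution_bounds[OF s a c _ _ _ e g _ _ _ T]; simp)+
    then show ?thesis
      unfolding R_def by (auto intro: less_le_trans[OF _ max.cobounded2])
  qed
  have "\<exists>C>0. \<forall>lam u. 0 < lam \<and> lam < 1 \<and> (\<forall>t. u t > 0) \<and>
      (\<forall>t. u (t + 2 * pi) = u t) \<and> classical_solution s a c lam g e u \<longrightarrow>
      (\<forall>t. 0 < u t \<and> u t < R) \<and> sqrt (integral {0..2*pi} (\<lambda>t. (deriv u t)\<^sup>2)) \<le> C * sqrt E"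
    using c bounds by (intro exI[of _ "1 / c"]) auto
  moreover have "0 < R"
    by (simp add: R_def)
  ultimately show ?thesis
    unfolding E_def by blast
qed

end
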